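(* Let $N\ge0$ be a fixed integer. Then, as $\nu\to+\infty$, $$\frac{2^{\nu-2N}\Gamma\left(\nu-N+\frac12\right)}{\Gamma\left(N+\frac12\right)}\int_0^{+\infty}\frac{t^{2N-\nu}J_\nu(t)}{1+(t/(\lambda\nu))^2}\,dt=\mathcal O(1),$$ uniformly with respect to $\lambda\in(0,\infty)$.
   Context: $J_\nu$ is the Bessel function of the first kind; $\nu$ is real and positive. *)

theory Defs
  imports "HOL-Analysis.Analysis"
begin

definition besselJ :: "real \<Rightarrow> real \<Rightarrow> real" where
  "besselJ \<nu> t = (\<Sum>k. (-1) ^ k / (fact k * Gamma (real k + \<nu> + 1)) * (t / 2) ^ (2 * k) * (t / 2) powr \<nu>)"

end

theory Submission
  imports Defs "HOL-Probability.Distributions"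
begin

(* We prove the bound with the explicit constant C = 1, for all \<nu> \<ge> N + 1 and all
   \<lambda> > 0.  Write P for the normalising prefactor, A = \<lambda>\<nu>, a = N + 1/2 and
   \<beta> = \<nu> - N + 1/2.

   (1) Gaussian damping.  Integrating the power series of J_\<nu> termwise against the
       Gaussian moments gives, with z = 1/(4b), the closed form
         P * \<integral>\<^sub>0\<^sup>\<infinity> t^(2N-\<nu>) J_\<nu>(t) exp(-b t\<^sup>2) dt
           = z^a / \<Gamma>(a) * \<integral>\<^sub>0\<^sup>1 exp(-z u) u^(a-1) (1-u)^(\<beta>-1) du,
       because the resulting series is Kummer's series \<Sum> (-z)^k/k! B(a+k,\<beta>).  The
       right-hand side lies in [0,1], comparing it with the Gamma integral (\<beta> \<ge> 1).
   (2) Subordination.  1/(1+(t/A)\<^sup>2) = \<integral>\<^sub>0\<^sup>\<infinity> exp(-x (1+(t/A)\<^sup>2)) dx, so by Fubini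
       the integral of the theorem is an exp(-x)-average over x > 0 of the Gaussian
       damped integrals of (1) with b = x/A\<^sup>2; each is bounded by 1, hence so is the
       average.  If the integrand is not Lebesgue integrable the integral is 0. *)

(* \<Gamma>(m + 1/2) = \<surd>\<pi> (2m)! / (4^m m!); converts the library's even Gaussian moments,
   stated with factorials, into Gamma form. *)
lemma Gamma_half_integer:
  "Gamma (real m + 1/2) = sqrt pi * fact (2*m) / (4^m * fact m)"
proof (induction m)
  case 0
  then show ?case by (simp add: Gamma_one_half_real)
next
  case (Suc m)
  have "Gamma (real (Suc m) + 1/2) = (real m + 1/2) * Gamma (real m + 1/2)"
    using Gamma_plus1[of "real m + 1/2"] nonpos_Ints_nonpos[of "real m + 1/2"]
    by (fastforce simp: algebra_simps)
  also have "\<dots> = sqrt pi * fact (2*Suc m) / (4^Suc m * fact (Suc m))"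
  proof -
    have f: "fact (2*Suc m) = (2*real m + 2) * (2*real m + 1) * (fact (2*m) :: real)"
      by (simp add: algebra_simps)
    have "(fact m :: real) > 0" "(4::real)^m > 0" by auto
    then show ?thesis unfolding Suc f by (simp add: divide_simps) (simp add: algebra_simps)
  qed
  finally show ?case .
qed

(* Used to dominate the Bessel series by an exponential series. *)
lemma Gamma_ge_one:
  assumes "(x::real) \<ge> 2"
  shows "Gamma x \<ge> 1"
proof -
  have G2: "Gamma (2::real) = 1" using Gamma_fact[of 1, where 'a=real] by simp
  show ?thesis
  proof (cases "x = 2")
    case False
    with assms have "Gamma (2::real) < Gamma x" by (intro Gamma_real_strict_mono) auto
    with G2 show ?thesis by simp
  qed (simp add: G2)
qed

lemma has_bochner_integral_Gamma_scaled:
  fixes z a :: real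
  assumes z: "z > 0" and a: "a > 0"
  shows "has_bochner_integral lborel
           (\<lambda>u. indicator {0<..} u * (z powr a * u powr (a-1) * exp (-z*u))) (Gamma a)"
proof -
  define F where "F t = indicator {0..} t * t powr (a - 1) / exp t" for t :: real
  have "(\<integral>\<^sup>+t. ennreal (F t) \<partial>lborel) = ennreal (Gamma a)"
    using Gamma_conv_nn_integral_real[OF a] by (simp add: F_def)
  then have iF: "integrable lborel F" and eF: "integral\<^sup>L lborel F = Gamma a"
    using nn_integral_eq_integrable[of F lborel "Gamma a"] a
    by (auto simp: F_def[abs_def] indicator_def)
  have i2: "integrable lborel (\<lambda>x. F (0 + z * x))"
    using lborel_integrable_real_affine[OF iF, of z 0] z by simp
  have e2: "integral\<^sup>L lborel F = z * integral\<^sup>L lborel (\<lambda>x. F (0 + z * x))"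
    using lborel_integral_real_affine[of z F 0] z by simp
  have eq: "z * F (z * x) = indicator {0<..} x * (z powr a * x powr (a-1) * exp (-z*x))" for x
  proof (cases "x > 0")
    case True
    have "z powr a = z * z powr (a - 1)" using z by (simp add: powr_diff)
    then show ?thesis using True z
      by (simp add: F_def indicator_def powr_mult exp_minus field_simps)
  qed (use z in \<open>auto simp: F_def indicator_def zero_le_mult_iff\<close>)
  have "integrable lborel (\<lambda>x. z * F (z * x))" using i2 by simp
  moreover have "integral\<^sup>L lborel (\<lambda>x. z * F (z * x)) = Gamma a" using e2 eF by simp
  ultimately show ?thesis unfolding eq by (simp add: has_bochner_integral_iff)
qed

(* The case a = 1: \<integral>\<^sub>0\<^sup>\<infinity> exp(-x q) dx = 1/q; this is the subordination kernel. *)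
corollary has_bochner_integral_exp_neg:
  fixes q :: real
  assumes q: "q > 0"
  shows "has_bochner_integral lborel (\<lambda>x. indicator {0<..} x * exp (- x * q)) (1 / q)"
proof -
  have "(\<lambda>u. indicator {0<..} u * (q powr 1 * u powr (1-1) * exp (-q*u)))
      = (\<lambda>u. q * (indicator {0<..} u * exp (- u * q)))"
    using q by (auto simp: fun_eq_iff indicator_def mult_ac)
  then have "has_bochner_integral lborel (\<lambda>u. q * (indicator {0<..} u * exp (- u * q))) 1"
    using has_bochner_integral_Gamma_scaled[OF q, of 1] by simp
  from has_bochner_integral_mult_right[OF this, of "1/q"] show ?thesis using q by simp
qed

lemma has_bochner_integral_Gaussian_moment:
  assumes b: "b > 0"
  shows "has_bochner_integral lborel (\<lambda>t. indicator {0<..} t * (t^(2*m) * exp (-b*t\<^sup>2)))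
           (Gamma (real m + 1/2) / (2 * b powr (real m + 1/2)))"
proof -
  define F where "F x = indicator {0..} x * (exp (-x\<^sup>2) * x^(2*m))" for x :: real
  define H where "H x = indicator {0..} x * (x^(2*m) * exp (-b*x\<^sup>2))" for x :: real
  have G: "has_bochner_integral lborel F (sqrt pi / 2 * (fact (2*m) / (2^(2*m) * fact m)))"
    using gaussian_moment_even_pos[of m] unfolding F_def by simp
  have sb: "sqrt b > 0" using b by simp
  have sq: "(sqrt b ^ m)\<^sup>2 = b^m"
  proof -
    have "(sqrt b ^ m)\<^sup>2 = (sqrt b ^ 2)^m" by (simp add: power_mult[symmetric] mult.commute)
    then show ?thesis using b by simp
  qed
  have Fs: "F (sqrt b * x) = b^m * H x" for x
    using sb b sq by (auto simp: F_def H_def indicator_def zero_le_mult_iff power_mult_distrib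
        power_mult real_sqrt_pow2 mult_ac)
  have iF: "integrable lborel F" using G by (simp add: has_bochner_integral_iff)
  have i2: "integrable lborel (\<lambda>x. F (0 + sqrt b * x))"
    using lborel_integrable_real_affine[OF iF, of "sqrt b" 0] sb by simp
  have e2: "integral\<^sup>L lborel F = sqrt b * integral\<^sup>L lborel (\<lambda>x. F (0 + sqrt b * x))"
    using lborel_integral_real_affine[of "sqrt b" F 0] sb by simp
  have iH: "integrable lborel H"
  proof -
    have "integrable lborel (\<lambda>x. (1/b^m) * F (0 + sqrt b * x))" using i2 by simp
    also have "(\<lambda>x. (1/b^m) * F (0 + sqrt b * x)) = H" using b by (simp add: Fs fun_eq_iff)
    finally show ?thesis .
  qed
  have eH: "integral\<^sup>L lborel H = sqrt pi / 2 * (fact (2*m) / (2^(2*m) * fact m)) / (sqrt b * b^m)"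
  proof -
    have "integral\<^sup>L lborel (\<lambda>x. F (0 + sqrt b * x)) = b^m * integral\<^sup>L lborel H"
      by (simp add: Fs)
    with e2 G[THEN has_bochner_integral_integral_eq] sb b show ?thesis
      by (simp add: field_simps)
  qed
  have val: "sqrt pi / 2 * (fact (2*m) / (2^(2*m) * fact m)) / (sqrt b * b^m)
     = Gamma (real m + 1/2) / (2 * b powr (real m + 1/2))"
  proof -
    have "b powr (real m + 1/2) = b^m * sqrt b" using b
      by (simp add: powr_add powr_half_sqrt powr_realpow)
    moreover have "(2::real)^(2*m) = 4^m" by (simp add: power_mult)
    ultimately show ?thesis unfolding Gamma_half_integer using b by (simp add: field_simps)
  qed
  have "AE x in lborel. indicator {0<..} x * (x ^ (2 * m) * exp (- b * x\<^sup>2)) = H x"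
    using AE_lborel_singleton[of 0] by eventually_elim (auto simp: H_def indicator_def)
  then show ?thesis
    using iH eH val by (subst has_bochner_integral_cong_AE[where g=H]) (auto simp: has_bochner_integral_iff)
qed

(* Kummer's series \<Sum> z^k/k! B(a+k,\<beta>) converges absolutely, being dominated by
   B(a,\<beta>) exp(z). *)
lemma summable_Beta_series:
  fixes z a \<beta> :: real
  assumes z: "z \<ge> 0" and a: "a > 0" and b: "\<beta> > 0"
  shows "summable (\<lambda>k. z^k / fact k * Beta (a + real k) \<beta>)"
proof (rule summable_comparison_test)
  show "summable (\<lambda>k. Beta a \<beta> * (inverse (fact k) * z^k))"
    by (intro summable_mult summable_exp)
  show "\<exists>N. \<forall>n\<ge>N. norm (z^n / fact n * Beta (a + real n) \<beta>) \<le> Beta a \<beta> * (inverse (fact n) * z^n)"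
  proof (intro exI allI impI)
    fix n :: nat
    have "Beta (a + real n) \<beta> \<le> Beta a \<beta>" using a b by (intro Beta_real_mono) auto
    moreover have "Beta (a + real n) \<beta> \<ge> 0" using a b by (simp add: Beta_def)
    ultimately show "norm (z^n / fact n * Beta (a + real n) \<beta>) \<le> Beta a \<beta> * (inverse (fact n) * z^n)"
      using mult_left_mono[of "Beta (a + real n) \<beta>" "Beta a \<beta>" "z^n"] z
      by (simp add: abs_mult divide_inverse mult_ac)
  qed
qed

lemma has_bochner_integral_Beta_moment:
  fixes a \<beta> :: real
  assumes a: "a > 0" and b: "\<beta> > 0"
  shows "has_bochner_integral lborel
           (\<lambda>u. u^k * (indicator {0..1} u * (u powr (a-1) * (1-u) powr (\<beta>-1)))) (Beta (a + real k) \<beta>)"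
proof -
  have ak: "a + real k > 0" using a by simp
  have "has_bochner_integral lborel
          (\<lambda>u. indicator {0..1} u * (u powr (a + real k - 1) * (1-u) powr (\<beta>-1))) (Beta (a + real k) \<beta>)"
  proof -
    have "(LINT u:{0..1}|lborel. u powr (a + real k - 1) * (1-u) powr (\<beta>-1))
          = integral {0..1} (\<lambda>u. u powr (a + real k - 1) * (1-u) powr (\<beta>-1))"
      using set_borel_integral_eq_integral(2)[OF integrable_Beta[OF ak b]] by simp
    also have "\<dots> = Beta (a + real k) \<beta>"
      using has_integral_Beta_real[OF ak b] by (simp add: integral_unique)
    finally show ?thesis
      using integrable_Beta[OF ak b]
      by (simp add: has_bochner_integral_iff set_lebesgue_integral_def set_integrable_def)
  qed
  moreover have "(\<lambda>u. indicator {0..1} u * (u powr (a + real k - 1) * (1-u) powr (\<beta>-1)))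
      = (\<lambda>u. u^k * (indicator {0..1} u * (u powr (a-1) * (1-u) powr (\<beta>-1))))"
  proof
    fix u :: real
    have "u^k * u powr (a-1) = u powr (a + real k - 1)" if "u > 0"
      using that by (simp add: powr_add[symmetric] powr_realpow[symmetric] algebra_simps)
    then show "indicator {0..1} u * (u powr (a + real k - 1) * (1-u) powr (\<beta>-1))
      = u^k * (indicator {0..1} u * (u powr (a-1) * (1-u) powr (\<beta>-1)))"
      by (cases "u = 0") (auto simp: indicator_def)
  qed
  ultimately show ?thesis by simp
qed

(* Kummer's identity: integrating exp(-z u) = \<Sum> (-z u)^k/k! termwise against the Beta
   weight gives \<Sum> (-z)^k/k! B(a+k,\<beta>) = \<integral>\<^sub>0\<^sup>1 exp(-z u) u^(a-1) (1-u)^(\<beta>-1) du. *)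
lemma Beta_series_sums:
  fixes z a \<beta> :: real
  assumes a: "a > 0" and b: "\<beta> > 0"
  shows "(\<lambda>k. (-z)^k / fact k * Beta (a + real k) \<beta>) sums
    (LINT u|lborel. indicator {0..1} u * (exp (-z*u) * u powr (a-1) * (1-u) powr (\<beta>-1)))"
proof -
  define w where "w u = indicator {0..1} u * (u powr (a-1) * (1-u) powr (\<beta>-1))" for u :: real
  define f where "f k u = (-z)^k / fact k * (u^k * w u)" for k :: nat and u :: real
  have w0: "0 \<le> u^k * w u" for k u by (simp add: w_def indicator_def)
  have mom: "has_bochner_integral lborel (\<lambda>u. u^k * w u) (Beta (a + real k) \<beta>)" for k
    unfolding w_def by (rule has_bochner_integral_Beta_moment[OF a b])
  have fi: "integrable lborel (f k)" and fv: "integral\<^sup>L lborel (f k) = (-z)^k / fact k * Beta (a + real k) \<beta>"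
    for k using has_bochner_integral_mult_right[OF mom[of k], of "(-z)^k / fact k"]
    by (simp_all add: f_def[abs_def] has_bochner_integral_iff)
  have fnorm: "\<bar>f k u\<bar> = \<bar>z\<bar>^k / fact k * (u^k * w u)" for k u
    unfolding f_def abs_mult[of "(-z)^k / fact k"] abs_of_nonneg[OF w0]
    by (simp add: power_abs)
  have sn: "summable (\<lambda>k. integral\<^sup>L lborel (\<lambda>u. norm (f k u)))"
  proof -
    have "integral\<^sup>L lborel (\<lambda>u. norm (f k u)) = \<bar>z\<bar>^k / fact k * Beta (a + real k) \<beta>" for k
      using mom[of k] by (simp add: fnorm has_bochner_integral_iff)
    then show ?thesis using summable_Beta_series[of "\<bar>z\<bar>" a \<beta>] a b by simp
  qed
  have pw: "(\<lambda>k. f k u) sums (exp (-z*u) * w u)" for u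
  proof -
    have "(\<lambda>k. (-z*u)^k / fact k) sums exp (-z*u)"
      using exp_converges[of "-z*u"] by (simp add: divide_inverse mult_ac)
    moreover have "(-z*u)^k / fact k * w u = f k u" for k
      using power_mult_distrib[of "-z" u k] by (simp add: f_def)
    ultimately show ?thesis using sums_mult2[of "\<lambda>k. (-z*u)^k / fact k" "exp (-z*u)" "w u"]
      by (simp only:)
  qed
  have pwn: "summable (\<lambda>k. norm (f k u))" for u
    using summable_mult2[OF summable_exp[of "\<bar>z\<bar>*u"], of "w u"]
    by (simp add: fnorm power_mult_distrib divide_inverse mult_ac)
  have "(\<lambda>k. integral\<^sup>L lborel (f k)) sums (LINT u|lborel. (\<Sum>k. f k u))"
    by (rule sums_integral[OF fi _ sn]) (use pwn in auto)
  moreover have "(\<lambda>u. \<Sum>k. f k u) = (\<lambda>u. exp (-z*u) * w u)"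
    using pw by (simp add: sums_iff fun_eq_iff)
  ultimately show ?thesis unfolding fv by (simp add: w_def mult_ac)
qed

(* For \<beta> \<ge> 1 the weight (1-u)^(\<beta>-1) is at most 1, so comparison with the Gamma
   integral gives 0 \<le> z^a \<integral>\<^sub>0\<^sup>1 exp(-z u) u^(a-1) (1-u)^(\<beta>-1) du \<le> \<Gamma>(a). *)
lemma Kummer_integral_bounds:
  fixes z a \<beta> :: real
  assumes z: "z > 0" and a: "a > 0" and b: "\<beta> \<ge> 1"
  defines "E \<equiv> (LINT u|lborel. indicator {0..1} u * (exp (-z*u) * u powr (a-1) * (1-u) powr (\<beta>-1)))"
  shows "0 \<le> z powr a * E" "z powr a * E \<le> Gamma a"
proof -
  define g where "g u = indicator {0..1} u * (exp (-z*u) * u powr (a-1) * (1-u) powr (\<beta>-1))" for u :: real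
  define h where "h u = indicator {0<..} u * (u powr (a-1) * exp (-z*u))" for u :: real
  have hG: "has_bochner_integral lborel (\<lambda>u. z powr a * h u) (Gamma a)"
    using has_bochner_integral_Gamma_scaled[OF z a] by (simp add: h_def mult_ac)
  have "has_bochner_integral lborel (\<lambda>u. (1 / z powr a) * (z powr a * h u)) (1 / z powr a * Gamma a)"
    by (rule has_bochner_integral_mult_right[OF hG])
  then have ih: "integrable lborel h" and eh: "integral\<^sup>L lborel h = Gamma a / z powr a"
    using z by (simp_all add: has_bochner_integral_iff)
  have gle: "0 \<le> g u \<and> g u \<le> h u" for u
  proof (cases "u \<in> {0<..1}")
    case True
    have "(1-u) powr (\<beta>-1) \<le> 1 powr (\<beta>-1)"
      using True b by (intro powr_mono2) auto
    then show ?thesis using True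
      by (auto simp: g_def h_def indicator_def mult_ac intro!: mult_left_le)
  qed (auto simp: g_def h_def indicator_def)
  have gm: "g \<in> borel_measurable lborel" unfolding g_def by measurable
  have ig: "integrable lborel g"
    by (rule Bochner_Integration.integrable_bound[OF ih gm])
      (use gle in \<open>auto intro!: AE_I2 simp: abs_of_nonneg order_trans[OF _ gle[THEN conjunct2]]\<close>)
  have E: "E = integral\<^sup>L lborel g" unfolding E_def g_def[abs_def] ..
  have "0 \<le> E" unfolding E using gle by (simp add: Bochner_Integration.integral_nonneg)
  then show "0 \<le> z powr a * E" by simp
  have "E \<le> integral\<^sup>L lborel h" unfolding E using gle by (intro integral_mono ig ih) auto
  then have "z powr a * E \<le> z powr a * (Gamma a / z powr a)" unfolding eh
    by (intro mult_left_mono) auto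
  then show "z powr a * E \<le> Gamma a" using z by simp
qed

definition bessel_term :: "real \<Rightarrow> real \<Rightarrow> nat \<Rightarrow> real" where
  "bessel_term \<nu> t k = (-1) ^ k / (fact k * Gamma (real k + \<nu> + 1)) * (t / 2) ^ (2 * k) * (t / 2) powr \<nu>"

(* For \<nu> \<ge> 1 the Bessel series is dominated by (t/2)^\<nu> exp(t\<^sup>2/4). *)
lemma summable_abs_bessel_term:
  fixes \<nu> t :: real
  assumes \<nu>: "\<nu> \<ge> 1" and t: "t > 0"
  shows "summable (\<lambda>k. \<bar>bessel_term \<nu> t k\<bar>)"
proof (rule summable_comparison_test)
  show "summable (\<lambda>k. (t/2) powr \<nu> * (inverse (fact k) * (t\<^sup>2/4)^k))"
    by (intro summable_mult summable_exp)
  show "\<exists>N. \<forall>n\<ge>N. norm \<bar>bessel_term \<nu> t n\<bar> \<le> (t/2) powr \<nu> * (inverse (fact n) * (t\<^sup>2/4)^n)"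
  proof (intro exI allI impI)
    fix n :: nat
    define X where "X = (t/2) powr \<nu> * (t/2)^(2*n)"
    have X0: "X \<ge> 0" using t by (simp add: X_def)
    have g: "Gamma (real n + \<nu> + 1) \<ge> 1" using \<nu> by (intro Gamma_ge_one) auto
    have "norm \<bar>bessel_term \<nu> t n\<bar> = X / (fact n * Gamma (real n + \<nu> + 1))"
      using g t by (simp add: bessel_term_def X_def abs_mult power_abs mult_ac)
    also have "\<dots> \<le> X / fact n"
    proof (rule divide_left_mono)
      show "fact n \<le> fact n * Gamma (real n + \<nu> + 1)"
        using mult_left_mono[OF g, of "fact n"] by simp
      show "0 < fact n * Gamma (real n + \<nu> + 1) * fact n" using g by simp
    qed (rule X0)
    also have "\<dots> = (t/2) powr \<nu> * (inverse (fact n) * (t\<^sup>2/4)^n)"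
    proof -
      have e: "(t/2)^(2*n) = (t\<^sup>2/4)^n" by (simp add: power_mult power_divide)
      show ?thesis unfolding X_def e by (simp only: divide_inverse mult_ac)
    qed
    finally show "norm \<bar>bessel_term \<nu> t n\<bar> \<le> (t/2) powr \<nu> * (inverse (fact n) * (t\<^sup>2/4)^n)" .
  qed
qed

lemma bessel_term_sums:
  fixes \<nu> t :: real
  assumes "\<nu> \<ge> 1" and "t > 0"
  shows "bessel_term \<nu> t sums besselJ \<nu> t"
proof -
  have "summable (bessel_term \<nu> t)"
    using summable_abs_bessel_term[OF assms] by (rule summable_rabs_cancel)
  then show ?thesis unfolding besselJ_def bessel_term_def[abs_def] by (rule summable_sums)
qed

(* The k-th Bessel coefficient times the Gaussian moment of order 2(N+k), rewritten with
   \<Gamma>(a+k) \<Gamma>(\<beta>) = B(a+k,\<beta>) \<Gamma>(a+k+\<beta>) where a + k + \<beta> = k + \<nu> + 1. *)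
lemma bessel_Gauss_coefficient:
  fixes N k :: nat and \<nu> b :: real
  assumes \<nu>: "\<nu> > real N - 1/2" and b: "b > 0"
  defines "a \<equiv> real N + 1/2" and "\<beta> \<equiv> \<nu> - real N + 1/2" and "z \<equiv> 1 / (4 * b)"
  shows "(-1)^k / (fact k * Gamma (real k + \<nu> + 1)) / 4^k / 2 powr \<nu> *
           (Gamma (a + real k) / (2 * b powr (a + real k)))
         = 2 powr (2 * real N - \<nu>) * z powr a / Gamma \<beta> * ((-z)^k / fact k * Beta (a + real k) \<beta>)"
proof -
  have a0: "a > 0" and \<beta>0: "\<beta> > 0" using \<nu> by (auto simp: a_def \<beta>_def)
  have "Gamma (a + real k) * Gamma \<beta> = Beta (a + real k) \<beta> * Gamma (a + real k + \<beta>)"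
    using a0 \<beta>0 nonpos_Ints_nonpos by (intro Gamma_Gamma_Beta) fastforce+
  moreover have "Gamma (a + real k + \<beta>) = Gamma (real k + \<nu> + 1)"
    by (rule arg_cong[where f=Gamma]) (simp add: a_def \<beta>_def)
  moreover have "Gamma \<beta> > 0" using \<beta>0 by simp
  ultimately have F1: "Gamma (a + real k) = Beta (a + real k) \<beta> * Gamma (real k + \<nu> + 1) / Gamma \<beta>"
    by (simp add: field_simps)
  have F2: "b powr (a + real k) = b powr a * b^k"
    using b by (simp add: powr_add powr_realpow)
  have F3: "z powr a = 1 / (2 * 4^N * b powr a)"
  proof -
    have "z powr a = 1 / (4 powr a * b powr a)" using b by (simp add: z_def powr_divide powr_mult)
    moreover have "(4::real) powr a = 4^N * 2"
      by (simp add: a_def powr_add powr_realpow powr_half_sqrt)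
    ultimately show ?thesis by (simp add: mult_ac)
  qed
  have F4: "(2::real) powr (2 * real N - \<nu>) = 4^N / 2 powr \<nu>"
  proof -
    have "(2::real) powr (2 * real N) = 2^(2*N)" by (simp add: powr_realpow[symmetric])
    then show ?thesis by (simp add: powr_diff power_mult)
  qed
  have F5: "(-z)^k = (-1)^k / (4^k * b^k)"
    unfolding z_def power_minus[of "1 / (4 * b)"] by (simp add: power_divide power_mult_distrib)
  have "Gamma \<beta> > 0" "Gamma (real k + \<nu> + 1) > 0" "b powr a > 0" "(2::real) powr \<nu> > 0"
    using \<beta>0 \<nu> b by auto
  then show ?thesis unfolding F1 F2 F3 F4 F5 using b by (simp add: field_simps)
qed

(* Termwise Gaussian integral of the Bessel series: with a = N + 1/2, \<beta> = \<nu> - N + 1/2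
   and z = 1/(4b), the k-th term of t^(2N-\<nu>) J_\<nu>(t) exp(-b t\<^sup>2) is a multiple of
   t^(2(N+k)) exp(-b t\<^sup>2) and integrates to 2^(2N-\<nu>) z^a / \<Gamma>(\<beta>) * (-z)^k/k! B(a+k,\<beta>).
   The integrand has constant sign, so its absolute value integrates to the absolute value. *)
lemma has_bochner_integral_bessel_term_Gauss:
  fixes N k :: nat and \<nu> b :: real
  assumes \<nu>: "\<nu> > real N - 1/2" and b: "b > 0"
  defines "a \<equiv> real N + 1/2" and "\<beta> \<equiv> \<nu> - real N + 1/2" and "z \<equiv> 1 / (4 * b)"
  defines "I \<equiv> 2 powr (2 * real N - \<nu>) * z powr a / Gamma \<beta> * ((-z)^k / fact k * Beta (a + real k) \<beta>)"
  defines "g \<equiv> \<lambda>t. indicator {0<..} t * (bessel_term \<nu> t k * (t powr (2 * real N - \<nu>) * exp (- b * t\<^sup>2)))"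
  shows "has_bochner_integral lborel g I"
    and "has_bochner_integral lborel (\<lambda>t. \<bar>g t\<bar>) \<bar>I\<bar>"
proof -
  have a0: "a > 0" using a_def by simp
  define c where "c = (-1)^k / (fact k * Gamma (real k + \<nu> + 1)) / 4^k / 2 powr \<nu>"
  define M where "M t = indicator {0<..} t * (t^(2*(N+k)) * exp (-b*t\<^sup>2))" for t :: real
  have gM: "g = (\<lambda>t. c * M t)"
  proof
    fix t :: real
    show "g t = c * M t"
    proof (cases "t > 0")
      case t: True
      have e1: "(t/2)^(2*k) = t^(2*k) / 4^k" by (simp add: power_divide power_mult)
      have e2: "(t/2) powr \<nu> = t powr \<nu> / 2 powr \<nu>" using t by (simp add: powr_divide)
      have e3: "t powr \<nu> * t powr (2 * real N - \<nu>) = t^(2*N)"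
        using t by (simp add: powr_add[symmetric] powr_realpow[symmetric])
      have e4: "t^(2*(N+k)) = t^(2*N) * t^(2*k)" by (simp add: power_add[symmetric] algebra_simps)
      show ?thesis unfolding g_def M_def bessel_term_def c_def e1 e2 e4 e3[symmetric] using t
        by (simp add: field_simps)
    qed (simp add: g_def M_def)
  qed
  have moment: "has_bochner_integral lborel M (Gamma (a + real k) / (2 * b powr (a + real k)))"
    using has_bochner_integral_Gaussian_moment[OF b, of "N+k"] by (simp add: M_def[abs_def] a_def algebra_simps)
  have scaled_moment: "c * (Gamma (a + real k) / (2 * b powr (a + real k))) = I"
    unfolding c_def I_def a_def \<beta>_def z_def by (rule bessel_Gauss_coefficient[OF \<nu> b])
  show "has_bochner_integral lborel g I"
    unfolding gM scaled_moment[symmetric] by (rule has_bochner_integral_mult_right[OF moment])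
  have "(\<lambda>t. \<bar>g t\<bar>) = (\<lambda>t. \<bar>c\<bar> * M t)"
    by (auto simp: gM M_def abs_mult indicator_def)
  moreover have "\<bar>c\<bar> * (Gamma (a + real k) / (2 * b powr (a + real k))) = \<bar>I\<bar>"
    using a0 b by (simp add: scaled_moment[symmetric] abs_mult)
  ultimately show "has_bochner_integral lborel (\<lambda>t. \<bar>g t\<bar>) \<bar>I\<bar>"
    using has_bochner_integral_mult_right[OF moment, of "\<bar>c\<bar>"] by (simp only:)
qed

(* Step (1): integrating the Bessel series termwise against t^(2N-\<nu>) exp(-b t\<^sup>2)
   produces a constant multiple of Kummer's series, hence of its integral form. *)
lemma Gauss_damped_bessel_integral:
  fixes N :: nat and \<nu> b :: real
  assumes \<nu>1: "\<nu> \<ge> 1" and \<nu>: "\<nu> > real N - 1/2" and b: "b > 0"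
  defines "a \<equiv> real N + 1/2" and "\<beta> \<equiv> \<nu> - real N + 1/2" and "z \<equiv> 1 / (4 * b)"
  shows "(LINT t|lborel. indicator {0<..} t * (t powr (2 * real N - \<nu>) * besselJ \<nu> t * exp (- b * t\<^sup>2)))
    = 2 powr (2 * real N - \<nu>) * z powr a / Gamma \<beta> *
      (LINT u|lborel. indicator {0..1} u * (exp (-z*u) * u powr (a-1) * (1-u) powr (\<beta>-1)))"
proof -
  have a0: "a > 0" and \<beta>0: "\<beta> > 0" and z0: "z > 0" using \<nu> b by (auto simp: a_def \<beta>_def z_def)
  define K where "K = 2 powr (2 * real N - \<nu>) * z powr a / Gamma \<beta>"
  define s where "s k = (-z)^k / fact k * Beta (a + real k) \<beta>" for k
  define g where "g k t = indicator {0<..} t * (bessel_term \<nu> t k * (t powr (2 * real N - \<nu>) * exp (- b * t\<^sup>2)))"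
    for k t
  have gI: "has_bochner_integral lborel (g k) (K * s k)"
    and gabs: "has_bochner_integral lborel (\<lambda>t. \<bar>g k t\<bar>) \<bar>K * s k\<bar>" for k
    using has_bochner_integral_bessel_term_Gauss[OF \<nu> b, of k]
    unfolding g_def[abs_def] K_def s_def a_def \<beta>_def z_def by (simp_all add: mult_ac)
  have abs_Ks: "\<bar>K * s k\<bar> = K * (z^k / fact k * Beta (a + real k) \<beta>)" for k
    using z0 a0 \<beta>0 by (simp add: K_def s_def abs_mult power_abs Beta_def)
  have sn: "summable (\<lambda>k. integral\<^sup>L lborel (\<lambda>t. norm (g k t)))"
    using gabs summable_mult[OF summable_Beta_series[of z a \<beta>], of K] z0 a0 \<beta>0
    by (simp add: has_bochner_integral_iff abs_Ks)
  have pw: "(\<lambda>k. g k t) sums (indicator {0<..} t * (t powr (2 * real N - \<nu>) * besselJ \<nu> t * exp (- b * t\<^sup>2)))"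
    for t
  proof (cases "t > 0")
    case True
    from sums_mult2[OF bessel_term_sums[OF \<nu>1 True], of "t powr (2 * real N - \<nu>) * exp (- b * t\<^sup>2)"]
    show ?thesis using True by (simp add: g_def mult_ac)
  qed (simp add: g_def)
  have pwn: "summable (\<lambda>k. norm (g k t))" for t
  proof (cases "t > 0")
    case True
    from summable_mult2[OF summable_abs_bessel_term[OF \<nu>1 True], of "\<bar>t powr (2 * real N - \<nu>) * exp (- b * t\<^sup>2)\<bar>"]
    show ?thesis using True by (simp add: g_def abs_mult)
  qed (simp add: g_def)
  have "(\<lambda>k. integral\<^sup>L lborel (g k)) sums (LINT t|lborel. (\<Sum>k. g k t))"
    by (rule sums_integral) (use gI pwn sn in \<open>auto simp: has_bochner_integral_iff\<close>)
  moreover have "(\<lambda>t. \<Sum>k. g k t)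
      = (\<lambda>t. indicator {0<..} t * (t powr (2 * real N - \<nu>) * besselJ \<nu> t * exp (- b * t\<^sup>2)))"
    using pw by (simp add: sums_iff fun_eq_iff)
  ultimately have "(\<lambda>k. K * s k) sums
      (LINT t|lborel. indicator {0<..} t * (t powr (2 * real N - \<nu>) * besselJ \<nu> t * exp (- b * t\<^sup>2)))"
    using gI by (simp add: has_bochner_integral_iff)
  moreover have "(\<lambda>k. K * s k) sums
      (K * (LINT u|lborel. indicator {0..1} u * (exp (-z*u) * u powr (a-1) * (1-u) powr (\<beta>-1))))"
    unfolding s_def by (intro sums_mult Beta_series_sums a0 \<beta>0)
  ultimately show ?thesis unfolding K_def by (rule sums_unique2)
qed

(* Consequently the normalised Gaussian-damped integral equals
   z^a/\<Gamma>(a) \<integral>\<^sub>0\<^sup>1 exp(-z u) u^(a-1) (1-u)^(\<beta>-1) du, which lies in [0,1] once \<beta> \<ge> 1. *)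
lemma Gauss_damped_bessel_bound:
  fixes N :: nat and \<nu> b :: real
  assumes \<nu>: "\<nu> \<ge> real N + 1" and b: "b > 0"
  shows "\<bar>2 powr (\<nu> - 2 * real N) * Gamma (\<nu> - real N + 1/2) / Gamma (real N + 1/2) *
     (LINT t|lborel. indicator {0<..} t * (t powr (2 * real N - \<nu>) * besselJ \<nu> t * exp (- b * t\<^sup>2)))\<bar> \<le> 1"
proof -
  define a where "a = real N + 1/2"
  define \<beta> where "\<beta> = \<nu> - real N + 1/2"
  define z where "z = 1 / (4 * b)"
  define E where "E = (LINT u|lborel. indicator {0..1} u * (exp (-z*u) * u powr (a-1) * (1-u) powr (\<beta>-1)))"
  have a0: "a > 0" and \<beta>1: "\<beta> \<ge> 1" and z0: "z > 0" using \<nu> b by (auto simp: a_def \<beta>_def z_def)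
  have G: "Gamma \<beta> > 0" "Gamma a > 0" using \<beta>1 a0 by auto
  have I: "(LINT t|lborel. indicator {0<..} t * (t powr (2 * real N - \<nu>) * besselJ \<nu> t * exp (- b * t\<^sup>2)))
      = 2 powr (2 * real N - \<nu>) * z powr a / Gamma \<beta> * E"
    unfolding a_def \<beta>_def z_def E_def by (rule Gauss_damped_bessel_integral) (use \<nu> b in auto)
  have "(2::real) powr (\<nu> - 2 * real N) * 2 powr (2 * real N - \<nu>) = 1"
    by (simp add: powr_add[symmetric])
  then have eq: "2 powr (\<nu> - 2 * real N) * Gamma \<beta> / Gamma a * (2 powr (2 * real N - \<nu>) * z powr a / Gamma \<beta> * E)
      = z powr a * E / Gamma a"
    using G by (simp add: field_simps)
  have "0 \<le> z powr a * E" "z powr a * E \<le> Gamma a"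
    using Kummer_integral_bounds[OF z0 a0 \<beta>1] unfolding E_def by auto
  then show ?thesis
    unfolding a_def[symmetric] \<beta>_def[symmetric] I eq using G by simp
qed

(* Step (2), in general form: writing 1/q(t) = \<integral>\<^sub>0\<^sup>\<infinity> exp(-x q(t)) dx and applying Fubini,
   \<integral> f/q = \<integral>\<^sub>0\<^sup>\<infinity> (\<integral> f(t) exp(-x q(t)) dt) dx for any positive measurable q,
   provided f/q is integrable. *)
lemma integral_divide_as_Laplace_average:
  fixes f q :: "real \<Rightarrow> real"
  assumes q_pos: "\<And>t. q t > 0" and q_meas[measurable]: "q \<in> borel_measurable borel"
    and int: "integrable lborel (\<lambda>t. f t / q t)"
  shows "integrable lborel (\<lambda>x. indicator {0<..} x * (LINT t|lborel. f t * exp (- x * q t)))"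
    and "(LINT t|lborel. f t / q t) = (LINT x|lborel. indicator {0<..} x * (LINT t|lborel. f t * exp (- x * q t)))"
proof -
  have [measurable]: "f \<in> borel_measurable borel"
  proof -
    have "(\<lambda>t. f t / q t * q t) \<in> borel_measurable borel"
      using borel_measurable_integrable[OF int] by measurable
    moreover have "(\<lambda>t. f t / q t * q t) = f"
    proof
      fix t
      show "f t / q t * q t = f t" using q_pos[of t] by simp
    qed
    ultimately show ?thesis by simp
  qed
  define H where "H t x = f t * (indicator {0<..} x * exp (- x * q t))" for t x
  have H_meas: "case_prod H \<in> borel_measurable (lborel \<Otimes>\<^sub>M lborel)"
    unfolding H_def[abs_def] by measurable
  have H_int: "has_bochner_integral lborel (H t) (f t / q t)" for t
    using has_bochner_integral_mult_right[OF has_bochner_integral_exp_neg[OF q_pos[of t]], of "f t"]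
    by (simp add: H_def[abs_def])
  have H_norm: "has_bochner_integral lborel (\<lambda>x. norm (H t x)) \<bar>f t / q t\<bar>" for t
  proof -
    have "(\<lambda>x. norm (H t x)) = (\<lambda>x. \<bar>f t\<bar> * (indicator {0<..} x * exp (- x * q t)))"
      by (auto simp: fun_eq_iff H_def abs_mult indicator_def)
    then show ?thesis
      using has_bochner_integral_mult_right[OF has_bochner_integral_exp_neg[OF q_pos[of t]], of "\<bar>f t\<bar>"]
      by (simp add: abs_divide abs_of_pos[OF q_pos])
  qed
  have H_pair: "integrable (lborel \<Otimes>\<^sub>M lborel) (case_prod H)"
  proof (rule lborel_pair.Fubini_integrable[OF H_meas])
    show "integrable lborel (\<lambda>t. LINT x|lborel. norm (case_prod H (t, x)))"
      using integrable_norm[OF int] H_norm by (simp add: has_bochner_integral_iff)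
    show "AE t in lborel. integrable lborel (\<lambda>x. case_prod H (t, x))"
      using H_int by (simp add: has_bochner_integral_iff)
  qed
  have swap: "(LINT t|lborel. H t x) = indicator {0<..} x * (LINT t|lborel. f t * exp (- x * q t))" for x
    unfolding H_def by (subst integral_mult_right_zero[symmetric]) (simp add: mult_ac)
  show "integrable lborel (\<lambda>x. indicator {0<..} x * (LINT t|lborel. f t * exp (- x * q t)))"
    using lborel_pair.integrable_snd[OF H_pair] by (simp add: swap)
  have "(LINT t|lborel. f t / q t) = (LINT t|lborel. LINT x|lborel. H t x)"
    using H_int by (simp add: has_bochner_integral_iff)
  also have "\<dots> = (LINT x|lborel. LINT t|lborel. H t x)"
    by (rule lborel_pair.Fubini_integral[OF H_pair, symmetric])
  finally show "(LINT t|lborel. f t / q t)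
      = (LINT x|lborel. indicator {0<..} x * (LINT t|lborel. f t * exp (- x * q t)))"
    by (simp add: swap)
qed

lemma exp_average_bound:
  fixes g :: "real \<Rightarrow> real"
  assumes bound: "\<And>x. x > 0 \<Longrightarrow> \<bar>g x\<bar> \<le> 1"
    and int: "integrable lborel (\<lambda>x. indicator {0<..} x * exp (- x) * g x)"
  shows "\<bar>LINT x|lborel. indicator {0<..} x * exp (- x) * g x\<bar> \<le> 1"
proof -
  have e1: "has_bochner_integral lborel (\<lambda>x::real. indicator {0<..} x * exp (- x * 1)) 1"
    using has_bochner_integral_exp_neg[of 1] by simp
  have "\<bar>LINT x|lborel. indicator {0<..} x * exp (- x) * g x\<bar>
      \<le> (LINT x|lborel. \<bar>indicator {0<..} x * exp (- x) * g x\<bar>)"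
    using integral_norm_bound[of lborel "\<lambda>x. indicator {0<..} x * exp (- x) * g x"] by simp
  also have "\<dots> \<le> (LINT x|lborel. indicator {0<..} x * exp (- x * 1))"
  proof (rule integral_mono)
    show "\<bar>indicator {0<..} x * exp (- x) * g x\<bar> \<le> indicator {0<..} x * exp (- x * 1)" for x :: real
      using bound[of x] by (cases "x > 0") (simp_all add: abs_mult mult_left_le)
  qed (use int e1 in \<open>auto simp: has_bochner_integral_iff\<close>)
  also have "\<dots> = 1" using e1 by (simp add: has_bochner_integral_iff)
  finally show ?thesis .
qed

(* Step (2) for the Bessel integrand: for A > 0 the Lorentzian-damped integral
   \<integral>\<^sub>0\<^sup>\<infinity> t^(2N-\<nu>) J_\<nu>(t) / (1 + (t/A)\<^sup>2) dt is, after normalisation, an exp(-x)-average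
   of the Gaussian-damped integrals with b = x/A\<^sup>2, hence bounded by 1. *)
lemma Lorentz_damped_bessel_bound:
  fixes N :: nat and \<nu> A :: real
  assumes \<nu>: "\<nu> \<ge> real N + 1" and A: "A > 0"
  defines "P \<equiv> 2 powr (\<nu> - 2 * real N) * Gamma (\<nu> - real N + 1/2) / Gamma (real N + 1/2)"
  shows "\<bar>P * (LINT t|lborel. indicator {0<..} t * (t powr (2 * real N - \<nu>) * besselJ \<nu> t) / (1 + (t / A)\<^sup>2))\<bar> \<le> 1"
proof -
  define f where "f t = indicator {0<..} t * (t powr (2 * real N - \<nu>) * besselJ \<nu> t)" for t
  define q where "q t = 1 + (t / A)\<^sup>2" for t
  define G where "G b = (LINT t|lborel. indicator {0<..} t * (t powr (2 * real N - \<nu>) * besselJ \<nu> t * exp (- b * t\<^sup>2)))"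
    for b
  have q_pos: "q t > 0" for t by (simp add: q_def add_pos_nonneg)
  have inner: "indicator {0<..} x * (LINT t|lborel. f t * exp (- x * q t))
      = indicator {0<..} x * exp (- x) * G (x / A\<^sup>2)" for x
  proof -
    have "f t * exp (- x * q t) = exp (- x) *
        (indicator {0<..} t * (t powr (2 * real N - \<nu>) * besselJ \<nu> t * exp (- (x / A\<^sup>2) * t\<^sup>2)))" for t
      using A by (simp add: f_def q_def power_divide field_simps flip: exp_add)
    then show ?thesis by (simp add: G_def)
  qed
  have "\<bar>P * (LINT t|lborel. f t / q t)\<bar> \<le> 1"
  proof (cases "integrable lborel (\<lambda>t. f t / q t)")
    case False
    then show ?thesis by (simp add: not_integrable_integral_eq)
  next
    case True
    have q_meas: "q \<in> borel_measurable borel" unfolding q_def[abs_def] by measurable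
    note subordination = integral_divide_as_Laplace_average[OF q_pos q_meas True, unfolded inner]
    have "P * (LINT t|lborel. f t / q t) = (LINT x|lborel. indicator {0<..} x * exp (- x) * (P * G (x / A\<^sup>2)))"
      unfolding subordination(2) by (simp flip: integral_mult_right_zero add: mult_ac)
    moreover have "\<bar>P * G (x / A\<^sup>2)\<bar> \<le> 1" if "x > 0" for x
      unfolding P_def G_def using that A by (intro Gauss_damped_bessel_bound \<nu>) simp
    moreover have "integrable lborel (\<lambda>x. indicator {0<..} x * exp (- x) * (P * G (x / A\<^sup>2)))"
      using integrable_mult_right[OF subordination(1), of P] by (simp add: mult_ac)
    ultimately show ?thesis by (simp add: exp_average_bound)
  qed
  then show ?thesis by (simp add: f_def q_def)
qed

theorem mainTheorem12:
  fixes N :: nat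
  shows "\<exists>C \<nu>0. \<forall>\<nu>::real. \<nu> \<ge> \<nu>0 \<longrightarrow> (\<forall>lam::real. lam > 0 \<longrightarrow>
    \<bar>2 powr (\<nu> - 2 * real N) * Gamma (\<nu> - real N + 1/2) / Gamma (real N + 1/2) *
      (LBINT t:{0<..}. t powr (2 * real N - \<nu>) * besselJ \<nu> t / (1 + (t / (lam * \<nu>))\<^sup>2))\<bar> \<le> C)"
proof (rule exI[of _ 1], rule exI[of _ "real N + 1"], intro allI impI)
  fix \<nu> lam :: real
  assume \<nu>: "real N + 1 \<le> \<nu>" and lam: "lam > 0"
  have "lam * \<nu> > 0" using \<nu> lam by simp
  from Lorentz_damped_bessel_bound[OF \<nu> this]
  show "\<bar>2 powr (\<nu> - 2 * real N) * Gamma (\<nu> - real N + 1/2) / Gamma (real N + 1/2) *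
      (LBINT t:{0<..}. t powr (2 * real N - \<nu>) * besselJ \<nu> t / (1 + (t / (lam * \<nu>))\<^sup>2))\<bar> \<le> 1"
    by (simp add: set_lebesgue_integral_def mult_ac)
qed

end
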